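(* Let $A$ be a Huber ring and $A_1\subset A_2$ rings of integral elements of $A$, and consider the homomorphism of Huber pairs $(A,A_1)\to(A,A_2)$ given by the identity of $A$. Then the image of the induced map $\phi\colon\mathrm{Spa}(A,A_2)\to\mathrm{Spa}(A,A_1)$ is closed under generalized horizontal specialization in $\mathrm{Spa}(A,A_1)$, i.e. every point of $\mathrm{Spa}(A,A_1)$ which is a generalized horizontal specialization of a point in the image lies in the image.
   Context: Points of $\mathrm{Spa}(A,A^+)$ are continuous valuations on $A$. For a valuation $v$ on $A$ with value group $\Gamma_v$, $c\Gamma_v$ is the convex subgroup generated by $\{v(a):v(a)\ge1\}$; for convex $H\supseteq c\Gamma_v$, $v|_H(a)=v(a)$ if $v(a)\in H$ and $0$ otherwise. A valuation $w$ is a generalized horizontal specialization of $v$ if either $w=v|_H$ for such an $H$ (horizontal specialization), or $c\Gamma_v$ is trivial and $w$ is a trivial valuation with $\mathrm{supp}(v|_{c\Gamma_v})\subset\mathrm{supp}(w)$. *)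

theory Defs
  imports Complex_Main "HOL-Library.Option_ord"
begin

text \<open>Topological commutative rings are types of class
  comm_ring_1 + topological_ab_group_add + topological_semigroup_mult.
  The Huber ring A is the whole type 'a.\<close>

definition is_subring :: "'a::comm_ring_1 set \<Rightarrow> bool" where
  "is_subring R \<longleftrightarrow> 0 \<in> R \<and> 1 \<in> R \<and> (\<forall>x\<in>R. \<forall>y\<in>R. x + y \<in> R \<and> x * y \<in> R) \<and> (\<forall>x\<in>R. - x \<in> R)"

definition ideal_gen :: "'a::comm_ring_1 set \<Rightarrow> 'a set \<Rightarrow> 'a set" where
  "ideal_gen R X = \<Inter>{J. X \<subseteq> J \<and> 0 \<in> J \<and> (\<forall>x\<in>J. \<forall>y\<in>J. x + y \<in> J) \<and> (\<forall>x\<in>J. - x \<in> J)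
                          \<and> (\<forall>r\<in>R. \<forall>x\<in>J. r * x \<in> J)}"

definition ideal_pow :: "'a::comm_ring_1 set \<Rightarrow> 'a set \<Rightarrow> nat \<Rightarrow> 'a set" where
  "ideal_pow R S n = ideal_gen R {prod_list xs | xs. set xs \<subseteq> S \<and> length xs = n}"

definition huber_ring :: "('a::{comm_ring_1, topological_ab_group_add, topological_semigroup_mult}) itself \<Rightarrow> bool" where
  "huber_ring _ \<longleftrightarrow> (\<exists>A0 :: 'a set. \<exists>S. is_subring A0 \<and> open A0 \<and> finite S \<and> S \<subseteq> A0 \<and>
      (\<forall>n. open (ideal_pow A0 S n)) \<and>
      (\<forall>U. open U \<and> (0::'a) \<in> U \<longrightarrow> (\<exists>n. ideal_pow A0 S n \<subseteq> U)))"

definition bounded_set :: "('a::{comm_ring_1, topological_ab_group_add, topological_semigroup_mult}) set \<Rightarrow> bool" where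
  "bounded_set T \<longleftrightarrow> (\<forall>U. open U \<and> 0 \<in> U \<longrightarrow> (\<exists>V. open V \<and> 0 \<in> V \<and> (\<forall>x\<in>V. \<forall>t\<in>T. x * t \<in> U)))"

definition power_bounded :: "('a::{comm_ring_1, topological_ab_group_add, topological_semigroup_mult}) set" where
  "power_bounded = {a. bounded_set (range (\<lambda>n::nat. a ^ n))}"

definition integral_over :: "'a::comm_ring_1 set \<Rightarrow> 'a \<Rightarrow> bool" where
  "integral_over R a \<longleftrightarrow> (\<exists>n>0. \<exists>c::nat \<Rightarrow> 'a. (\<forall>i<n. c i \<in> R) \<and> a ^ n + (\<Sum>i<n. c i * a ^ i) = 0)"

definition ring_of_integral_elements :: "('a::{comm_ring_1, topological_ab_group_add, topological_semigroup_mult}) set \<Rightarrow> bool" where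
  "ring_of_integral_elements Ap \<longleftrightarrow> is_subring Ap \<and> open Ap \<and> (\<forall>a. integral_over Ap a \<longrightarrow> a \<in> Ap)
      \<and> Ap \<subseteq> power_bounded"

text \<open>A valuation with values in \<Gamma> \<union> {0} where \<Gamma> is a totally ordered abelian group,
  written additively as 'g: Some g stands for the group element g (Some 0 is 1),
  None stands for 0. The order on 'g option (Option_ord) puts None at the bottom.\<close>

fun vmul :: "'g::linordered_ab_group_add option \<Rightarrow> 'g option \<Rightarrow> 'g option" where
  "vmul (Some x) (Some y) = Some (x + y)"
| "vmul _ _ = None"

definition valuation :: "('a::comm_ring_1 \<Rightarrow> 'g::linordered_ab_group_add option) \<Rightarrow> bool" where
  "valuation v \<longleftrightarrow> v 0 = None \<and> v 1 = Some 0 \<and> (\<forall>a b. v (a * b) = vmul (v a) (v b))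
      \<and> (\<forall>a b. v (a + b) \<le> max (v a) (v b))"

definition is_subgrp :: "'g::ab_group_add set \<Rightarrow> bool" where
  "is_subgrp H \<longleftrightarrow> 0 \<in> H \<and> (\<forall>x\<in>H. \<forall>y\<in>H. x + y \<in> H) \<and> (\<forall>x\<in>H. - x \<in> H)"

definition gen_subgrp :: "'g::ab_group_add set \<Rightarrow> 'g set" where
  "gen_subgrp X = \<Inter>{H. is_subgrp H \<and> X \<subseteq> H}"

definition value_group :: "('a \<Rightarrow> 'g::linordered_ab_group_add option) \<Rightarrow> 'g set" where
  "value_group v = gen_subgrp {g. \<exists>a. v a = Some g}"

definition convex_subgrp :: "'g::linordered_ab_group_add set \<Rightarrow> 'g set \<Rightarrow> bool" where
  "convex_subgrp G H \<longleftrightarrow> is_subgrp H \<and> H \<subseteq> G \<and> (\<forall>x\<in>G. \<forall>h\<in>H. h \<le> x \<and> x \<le> 0 \<longrightarrow> x \<in> H)"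

definition cGamma :: "('a \<Rightarrow> 'g::linordered_ab_group_add option) \<Rightarrow> 'g set" where
  "cGamma v = \<Inter>{H. convex_subgrp (value_group v) H \<and> {g. \<exists>a. v a = Some g \<and> 0 \<le> g} \<subseteq> H}"

definition restrict_val :: "('a \<Rightarrow> 'g::linordered_ab_group_add option) \<Rightarrow> 'g set \<Rightarrow> ('a \<Rightarrow> 'g option)" where
  "restrict_val v H = (\<lambda>a. case v a of Some g \<Rightarrow> (if g \<in> H then Some g else None) | None \<Rightarrow> None)"

definition supp_val :: "('a \<Rightarrow> 'g::linordered_ab_group_add option) \<Rightarrow> 'a set" where
  "supp_val v = {a. v a = None}"

definition trivial_val :: "('a \<Rightarrow> 'g::linordered_ab_group_add option) \<Rightarrow> bool" where
  "trivial_val v \<longleftrightarrow> (\<forall>a. v a = None \<or> v a = Some 0)"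

definition val_equiv :: "('a \<Rightarrow> 'g::linordered_ab_group_add option) \<Rightarrow> ('a \<Rightarrow> 'h::linordered_ab_group_add option) \<Rightarrow> bool" where
  "val_equiv v w \<longleftrightarrow> (\<forall>a b. v a \<le> v b \<longleftrightarrow> w a \<le> w b)"

definition continuous_val :: "('a::topological_space \<Rightarrow> 'g::linordered_ab_group_add option) \<Rightarrow> bool" where
  "continuous_val v \<longleftrightarrow> (\<forall>\<gamma>\<in>value_group v. open {a. v a < Some \<gamma>})"

text \<open>Spa(A, A+) as a set of valuations with value group in 'g; points of the adic
  spectrum are equivalence classes of such valuations.\<close>
definition Spa :: "('a::{comm_ring_1, topological_ab_group_add, topological_semigroup_mult}) set
    \<Rightarrow> ('a \<Rightarrow> 'g::linordered_ab_group_add option) set" where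
  "Spa Ap = {v. valuation v \<and> continuous_val v \<and> (\<forall>a\<in>Ap. v a \<le> Some 0)}"

definition gen_horiz_spec :: "('a::comm_ring_1 \<Rightarrow> 'g::linordered_ab_group_add option)
    \<Rightarrow> ('a \<Rightarrow> 'h::linordered_ab_group_add option) \<Rightarrow> bool" where
  "gen_horiz_spec v w \<longleftrightarrow>
     (\<exists>H. convex_subgrp (value_group v) H \<and> cGamma v \<subseteq> H \<and> val_equiv w (restrict_val v H))
   \<or> (cGamma v = {0} \<and> trivial_val w \<and> supp_val (restrict_val v (cGamma v)) \<subseteq> supp_val w)"

definition spa_map :: "('a \<Rightarrow> 'b) \<Rightarrow> ('b \<Rightarrow> 'g option) \<Rightarrow> ('a \<Rightarrow> 'g option)" where
  "spa_map f v = v \<circ> f"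

end

theory Submission
  imports Defs
begin

text \<open>Since the homomorphism is the identity, the image of \<open>\<phi>\<close> is \<open>Spa(A,A\<^sub>2)\<close> itself,
  so it suffices that a generalized horizontal specialization \<open>w \<in> Spa(A,A\<^sub>1)\<close> of a point
  \<open>v \<in> Spa(A,A\<^sub>2)\<close> is again bounded by 1 on \<open>A\<^sub>2\<close>. Either \<open>w\<close> is equivalent to some \<open>v|\<^sub>H\<close>,
  and \<open>v|\<^sub>H \<le> v\<close> pointwise, or \<open>w\<close> is trivial and hence bounded by 1 everywhere.\<close>

lemma spa_map_id [simp]: "spa_map id v = v"
  by (simp add: spa_map_def)

lemma restrict_val_le: "restrict_val v H a \<le> v a"
  by (cases "v a") (auto simp: restrict_val_def)

lemma restrict_val_one:
  assumes "valuation v" and "0 \<in> H"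
  shows "restrict_val v H 1 = Some 0"
  using assms by (simp add: restrict_val_def valuation_def)

lemma val_equiv_le_one:
  assumes "val_equiv w u" and "valuation w" and "u 1 = Some 0" and "u a \<le> Some 0"
  shows "w a \<le> Some 0"
proof -
  have "w a \<le> w 1"
    using assms(1,3,4) unfolding val_equiv_def by metis
  then show ?thesis
    using assms(2) by (simp add: valuation_def)
qed

lemma trivial_val_le_one: "trivial_val w \<Longrightarrow> w a \<le> Some 0"
  unfolding trivial_val_def by (metis order_refl less_eq_option_None)

lemma gen_horiz_spec_le_one:
  assumes "gen_horiz_spec v w" and "valuation v" and "valuation w" and "v a \<le> Some 0"
  shows "w a \<le> Some 0"
  using assms(1) unfolding gen_horiz_spec_def
proof
  assume "\<exists>H. convex_subgrp (value_group v) H \<and> cGamma v \<subseteq> H \<and> val_equiv w (restrict_val v H)"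
  then obtain H where H: "convex_subgrp (value_group v) H" "val_equiv w (restrict_val v H)"
    by blast
  have "0 \<in> H"
    using H(1) by (simp add: convex_subgrp_def is_subgrp_def)
  moreover have "restrict_val v H a \<le> Some 0"
    using restrict_val_le [of v H a] assms(4) by (rule order_trans)
  ultimately show ?thesis
    using val_equiv_le_one [OF H(2) assms(3)] restrict_val_one [OF assms(2)] by blast
next
  assume "cGamma v = {0} \<and> trivial_val w \<and> supp_val (restrict_val v (cGamma v)) \<subseteq> supp_val w"
  then show ?thesis
    using trivial_val_le_one by auto
qed

lemma Spa_closed_gen_horiz_spec:
  assumes "v \<in> Spa Ap" and "w \<in> Spa B" and "gen_horiz_spec v w"
  shows "w \<in> Spa Ap"
proof -
  have "valuation v" "\<forall>a\<in>Ap. v a \<le> Some 0"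
    using assms(1) by (auto simp: Spa_def)
  moreover have "valuation w" "continuous_val w"
    using assms(2) by (auto simp: Spa_def)
  ultimately show ?thesis
    using gen_horiz_spec_le_one assms(3) by (auto simp: Spa_def)
qed

theorem lemma3p7:
  fixes A1 A2 :: "('a::{comm_ring_1, topological_ab_group_add, topological_semigroup_mult}) set"
    and v :: "'a \<Rightarrow> 'g::linordered_ab_group_add option"
    and w :: "'a \<Rightarrow> 'h::linordered_ab_group_add option"
  assumes "huber_ring TYPE('a)"
    and "ring_of_integral_elements A1" and "ring_of_integral_elements A2" and "A1 \<subseteq> A2"
    and "v \<in> spa_map id ` Spa A2"
    and "w \<in> Spa A1"
    and "gen_horiz_spec v w"
  shows "\<exists>u \<in> spa_map id ` (Spa A2 :: ('a \<Rightarrow> 'h option) set). val_equiv u w"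
proof -
  have "v \<in> Spa A2"
    using assms(5) by auto
  then have "w \<in> Spa A2"
    using Spa_closed_gen_horiz_spec assms(6,7) by blast
  moreover have "val_equiv w w"
    by (simp add: val_equiv_def)
  ultimately show ?thesis
    by (metis spa_map_id image_eqI)
qed

end
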